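(* Let $a<b$, let $\alpha\in(0,1]$, let $k:[a,b]\to\mathbb{R}$ be a continuous nonnegative map, differentiable at every $t>a$, with $k(t)\neq 0$ and $k'(t)\neq 0$ whenever $t>a$. Let $f:[a,b]\to\mathbb{R}$ and let $t_0\in(a,b)$ with $t_0>0$. If $f$ is $\alpha$-differentiable at $t_0$, then $f$ is continuous at $t_0$.
   Context: For $k$ as in the claim, $f:[a,b]\to\mathbb{R}$, $\alpha\in(0,1]$ and $t\in(a,b)$, the generalized fractional derivative of $f$ of order $\alpha$ at $t$ is $$D^{\alpha}(f)(t)=f^{(\alpha)}(t):=\lim_{\varepsilon\to 0}\frac{f\left(t-k(t)+k(t)\,e^{\varepsilon\frac{(k(t))^{-\alpha}}{k'(t)}}\right)-f(t)}{\varepsilon},$$ and $f$ is called $\alpha$-differentiable at $t$ if this limit exists (for $|\varepsilon|$ small the argument of $f$ lies in $[a,b]$). *)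

theory Defs
  imports "HOL-Analysis.Analysis"
begin

definition gen_frac_quot ::
  "(real \<Rightarrow> real) \<Rightarrow> (real \<Rightarrow> real) \<Rightarrow> real \<Rightarrow> (real \<Rightarrow> real) \<Rightarrow> real \<Rightarrow> real \<Rightarrow> real" where
  "gen_frac_quot k k' \<alpha> f t \<epsilon> =
     (f (t - k t + k t * exp (\<epsilon> * (k t) powr (- \<alpha>) / k' t)) - f t) / \<epsilon>"

definition alpha_differentiable ::
  "(real \<Rightarrow> real) \<Rightarrow> (real \<Rightarrow> real) \<Rightarrow> real \<Rightarrow> (real \<Rightarrow> real) \<Rightarrow> real \<Rightarrow> bool" where
  "alpha_differentiable k k' \<alpha> f t \<longleftrightarrow>
     (\<exists>L. (gen_frac_quot k k' \<alpha> f t \<longlongrightarrow> L) (at 0))"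

end

theory Submission
  imports Defs
begin

text \<open>The argument of f in the quotient is \<open>\<phi> \<epsilon> = t - K + K exp (c \<epsilon>)\<close> with \<open>K = k t > 0\<close> and
  \<open>c = K powr - \<alpha> / k' t \<noteq> 0\<close>. Near t this map has the continuous inverse
  \<open>\<psi> x = ln ((x - t + K) / K) / c\<close>, which vanishes only at t. Hence
  \<open>f x - f t = \<psi> x \<cdot> (f (\<phi> (\<psi> x)) - f t) / \<psi> x\<close>, a product of a function tending to 0 and one
  tending to the \<alpha>-derivative.\<close>

lemma isCont_if_quotient_converges_along_inverse:
  fixes f \<phi> \<psi> :: "real \<Rightarrow> real"
  assumes quot: "((\<lambda>\<epsilon>. (f (\<phi> \<epsilon>) - f t) / \<epsilon>) \<longlongrightarrow> L) (at 0)"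
    and \<psi>_lim: "(\<psi> \<longlongrightarrow> 0) (at t)"
    and \<psi>_inv: "\<forall>\<^sub>F x in at t. \<psi> x \<noteq> 0 \<and> \<phi> (\<psi> x) = x"
  shows "isCont f t"
proof -
  have "filterlim \<psi> (at 0) (at t)"
    using \<psi>_lim \<psi>_inv by (auto intro: filterlim_atI elim: eventually_mono)
  with quot have "((\<lambda>x. (f (\<phi> (\<psi> x)) - f t) / \<psi> x) \<longlongrightarrow> L) (at t)"
    by (rule filterlim_compose)
  with \<psi>_lim have "((\<lambda>x. f t + \<psi> x * ((f (\<phi> (\<psi> x)) - f t) / \<psi> x)) \<longlongrightarrow> f t + 0 * L) (at t)"
    by (intro tendsto_intros)
  moreover have "\<forall>\<^sub>F x in at t. f t + \<psi> x * ((f (\<phi> (\<psi> x)) - f t) / \<psi> x) = f x"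
    using \<psi>_inv by (rule eventually_mono) simp
  ultimately have "(f \<longlongrightarrow> f t) (at t)"
    by (simp add: tendsto_cong)
  then show ?thesis
    by (simp add: isCont_def)
qed

lemma exp_reparametrization_local_inverse:
  fixes K c t :: real
  assumes "K > 0" and "c \<noteq> 0"
  defines "\<psi> \<equiv> \<lambda>x. ln ((x - t + K) / K) / c"
  shows "(\<psi> \<longlongrightarrow> 0) (at t)"
    and "\<forall>\<^sub>F x in at t. \<psi> x \<noteq> 0 \<and> t - K + K * exp (\<psi> x * c) = x"
proof -
  show "(\<psi> \<longlongrightarrow> 0) (at t)"
    unfolding \<psi>_def using assms(1,2) by (auto intro!: tendsto_eq_intros)
  have "((\<lambda>x. x - t + K) \<longlongrightarrow> K) (at t)"
    by (auto intro!: tendsto_eq_intros)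
  then have "\<forall>\<^sub>F x in at t. x - t + K > 0"
    using \<open>K > 0\<close> by (rule order_tendstoD)
  moreover have "\<forall>\<^sub>F x in at t. x \<noteq> t"
    by (simp add: eventually_at_filter)
  ultimately show "\<forall>\<^sub>F x in at t. \<psi> x \<noteq> 0 \<and> t - K + K * exp (\<psi> x * c) = x"
  proof eventually_elim
    case (elim x)
    then have "(x - t + K) / K \<noteq> 1" "(x - t + K) / K > 0"
      using \<open>K > 0\<close> by (auto simp: field_simps)
    then show ?case
      unfolding \<psi>_def using \<open>K > 0\<close> \<open>c \<noteq> 0\<close> by (auto simp: field_simps)
  qed
qed

theorem mainTheorem2:
  fixes a b \<alpha> t0 :: real and k k' f :: "real \<Rightarrow> real"
  assumes "a < b"
    and "\<alpha> \<in> {0<..1}"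
    and "continuous_on {a..b} k"
    and "\<forall>t\<in>{a..b}. k t \<ge> 0"
    and "\<forall>t\<in>{a<..b}. (k has_real_derivative k' t) (at t within {a..b})"
    and "\<forall>t\<in>{a<..b}. k t \<noteq> 0 \<and> k' t \<noteq> 0"
    and "t0 \<in> {a<..<b}" and "t0 > 0"
    and "alpha_differentiable k k' \<alpha> f t0"
  shows "isCont f t0"
proof -
  define c where "c = k t0 powr (- \<alpha>) / k' t0"
  have "k t0 > 0" and "k' t0 \<noteq> 0"
    using assms(4,6,7) by (auto simp: order.order_iff_strict)
  then have "c \<noteq> 0"
    by (simp add: c_def)
  obtain L where "(gen_frac_quot k k' \<alpha> f t0 \<longlongrightarrow> L) (at 0)"
    using assms(9) unfolding alpha_differentiable_def by blast
  moreover have "gen_frac_quot k k' \<alpha> f t0 = (\<lambda>\<epsilon>. (f (t0 - k t0 + k t0 * exp (\<epsilon> * c)) - f t0) / \<epsilon>)"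
    by (simp add: fun_eq_iff gen_frac_quot_def c_def)
  ultimately have "((\<lambda>\<epsilon>. (f (t0 - k t0 + k t0 * exp (\<epsilon> * c)) - f t0) / \<epsilon>) \<longlongrightarrow> L) (at 0)"
    by simp
  then show ?thesis
    using exp_reparametrization_local_inverse[OF \<open>k t0 > 0\<close> \<open>c \<noteq> 0\<close>, where t = t0]
    by (rule isCont_if_quotient_converges_along_inverse)
qed

end
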